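(* Let $K\ge 2$ and let $\mathbf{z}_r$ and $\mathrm{OPT}\text{-}\mathbf{Q}^\star$ be as in the context. Let $\lambda_j^\star$ be the $j$-th eigenvalue of $\mathbf{Q}^\star$, with $\lambda_j^\star=0$ if $j>r^\star$. If $r\le r^\star$ and $\mathbf{H}$ is Hermitian, then $$\left|\mathrm{OPT}\text{-}\mathbf{Q}^\star-\mathbf{z}_r^\dagger\mathbf{Q}^\star\mathbf{z}_r\right|\le O\!\left(n\left(\lambda_{r+1}^\star+\|\mathbf{H}\|_2\right)\right).$$
   Context: $\mathcal{A}_K=\{\exp(2\pi\mathrm{i}k/K):k=0,\dots,K-1\}$. $\mathbf{Q}^\star\in\mathbb{C}^{n\times n}$ is Hermitian positive semi-definite of rank $r^\star$ with eigenvalues $\lambda_1^\star\ge\lambda_2^\star\ge\dots$. $\mathbf{H}\in\mathbb{C}^{n\times n}$ and $\mathbf{Q}=\mathbf{Q}^\star+\mathbf{H}$. $\mathbf{Q}_r=\mathbf{V}_r\boldsymbol{\Sigma}_r\mathbf{V}_r^\dagger$ with $\boldsymbol{\Sigma}_r$ the top-$r$ singular values of $\mathbf{Q}$ and $\mathbf{V}_r$ the corresponding left singular vectors. $\mathrm{OPT}\text{-}\mathbf{Q}^\star=\max_{\mathbf{z}\in\mathcal{A}_K^n}\mathbf{z}^\dagger\mathbf{Q}^\star\mathbf{z}$ and $\mathbf{z}_r$ attains $\max_{\mathbf{z}\in\mathcal{A}_K^n}\mathbf{z}^\dagger\mathbf{Q}_r\mathbf{z}$. $\|\cdot\|_2$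 is the spectral norm; $O(\cdot)$ hides an absolute constant. *)

theory Defs
  imports "HOL-Analysis.Analysis"
begin

text \<open>n x n complex matrices are represented as functions nat => nat => complex,
  only the entries with indices below n being relevant; vectors likewise as nat => complex.\<close>

definition roots_of_unity :: "nat \<Rightarrow> complex set" where
  "roots_of_unity K = {exp (2 * of_real pi * \<i> * of_nat k / of_nat K) | k. k < K}"

definition feasible :: "nat \<Rightarrow> nat \<Rightarrow> (nat \<Rightarrow> complex) set" where
  "feasible n K = {z. (\<forall>i<n. z i \<in> roots_of_unity K) \<and> (\<forall>i\<ge>n. z i = 0)}"

definition quad :: "nat \<Rightarrow> (nat \<Rightarrow> nat \<Rightarrow> complex) \<Rightarrow> (nat \<Rightarrow> complex) \<Rightarrow> complex" where
  "quad n A z = (\<Sum>i<n. \<Sum>j<n. cnj (z i) * A i j * z j)"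

definition hermitian :: "nat \<Rightarrow> (nat \<Rightarrow> nat \<Rightarrow> complex) \<Rightarrow> bool" where
  "hermitian n A \<longleftrightarrow> (\<forall>i<n. \<forall>j<n. A i j = cnj (A j i))"

definition psd :: "nat \<Rightarrow> (nat \<Rightarrow> nat \<Rightarrow> complex) \<Rightarrow> bool" where
  "psd n A \<longleftrightarrow> hermitian n A \<and> (\<forall>z. Im (quad n A z) = 0 \<and> Re (quad n A z) \<ge> 0)"

definition unitary_mat :: "nat \<Rightarrow> (nat \<Rightarrow> nat \<Rightarrow> complex) \<Rightarrow> bool" where
  "unitary_mat n U \<longleftrightarrow> (\<forall>i<n. \<forall>j<n. (\<Sum>k<n. cnj (U k i) * U k j) = (if i = j then 1 else 0))"

definition factorization :: "nat \<Rightarrow> (nat \<Rightarrow> nat \<Rightarrow> complex) \<Rightarrow> (nat \<Rightarrow> nat \<Rightarrow> complex)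
    \<Rightarrow> (nat \<Rightarrow> real) \<Rightarrow> (nat \<Rightarrow> nat \<Rightarrow> complex) \<Rightarrow> bool" where
  "factorization n A U d W \<longleftrightarrow>
     (\<forall>i<n. \<forall>j<n. A i j = (\<Sum>k<n. U i k * of_real (d k) * cnj (W j k)))"

definition vnorm :: "nat \<Rightarrow> (nat \<Rightarrow> complex) \<Rightarrow> real" where
  "vnorm n x = sqrt (\<Sum>i<n. (cmod (x i))\<^sup>2)"

definition mulv :: "nat \<Rightarrow> (nat \<Rightarrow> nat \<Rightarrow> complex) \<Rightarrow> (nat \<Rightarrow> complex) \<Rightarrow> (nat \<Rightarrow> complex)" where
  "mulv n A x = (\<lambda>i. \<Sum>j<n. A i j * x j)"

definition spec_norm :: "nat \<Rightarrow> (nat \<Rightarrow> nat \<Rightarrow> complex) \<Rightarrow> real" where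
  "spec_norm n A = Sup {vnorm n (mulv n A x) | x. vnorm n x \<le> 1}"

definition trunc :: "nat \<Rightarrow> (nat \<Rightarrow> nat \<Rightarrow> complex) \<Rightarrow> (nat \<Rightarrow> real) \<Rightarrow> (nat \<Rightarrow> nat \<Rightarrow> complex)" where
  "trunc r V sv = (\<lambda>i j. \<Sum>k<r. V i k * of_real (sv k) * cnj (V j k))"

definition OPT :: "nat \<Rightarrow> nat \<Rightarrow> (nat \<Rightarrow> nat \<Rightarrow> complex) \<Rightarrow> real" where
  "OPT n K A = Max {Re (quad n A z) | z. z \<in> feasible n K}"

end

theory Submission
  imports Defs
begin

(* Write Q = Q* + H = V diag(sv) W^dagger. Since Q >= -||H||, a singular value larger than ||H||
   belongs to a positive eigenvalue, so its left and right singular vectors coincide. Hence in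
   z^dagger Q z = sum_k sv_k <w_k, z> conj <v_k, z> the first r terms differ from z^dagger Q_r z
   by at most 4 ||H|| |z|^2, the remaining ones contribute at most 2 sv_r |z|^2 by Bessel's
   inequality, and Weyl's inequality gives sv_r <= lam_r + ||H|| (indices start at 0). Together
   with |z^dagger H z| <= ||H|| |z|^2, the forms of Q* and Q_r differ by at most
   (7 ||H|| + 2 lam_r) n on the feasible set, whose points have squared norm n; a maximizer of
   one form is therefore optimal for the other up to twice that amount. *)

definition cinner :: "nat \<Rightarrow> (nat \<Rightarrow> complex) \<Rightarrow> (nat \<Rightarrow> complex) \<Rightarrow> complex" where
  "cinner n x y = (\<Sum>i<n. cnj (x i) * y i)"

definition col :: "(nat \<Rightarrow> nat \<Rightarrow> complex) \<Rightarrow> nat \<Rightarrow> nat \<Rightarrow> complex" where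
  "col M k = (\<lambda>i. M i k)"

definition col_comb :: "nat set \<Rightarrow> (nat \<Rightarrow> complex) \<Rightarrow> (nat \<Rightarrow> nat \<Rightarrow> complex) \<Rightarrow> nat \<Rightarrow> complex" where
  "col_comb I c M = (\<lambda>i. \<Sum>k\<in>I. c k * M i k)"

lemma cnj_mult_self: "cnj z * z = of_real ((cmod z)\<^sup>2)"
  by (metis complex_norm_square mult.commute)

lemma vnorm_eq_L2_set: "vnorm n x = L2_set (\<lambda>i. cmod (x i)) {..<n}"
  unfolding vnorm_def L2_set_def by simp

lemma vnorm_nonneg: "0 \<le> vnorm n x"
  by (simp add: vnorm_eq_L2_set)

lemma vnorm_power2: "(vnorm n x)\<^sup>2 = (\<Sum>i<n. (cmod (x i))\<^sup>2)"
  by (simp add: vnorm_def sum_nonneg)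

lemma vnorm_eq_0_iff: "vnorm n x = 0 \<longleftrightarrow> (\<forall>i<n. x i = 0)"
  by (auto simp: vnorm_eq_L2_set L2_set_eq_0_iff)

lemma vnorm_cong: "(\<And>i. i < n \<Longrightarrow> x i = y i) \<Longrightarrow> vnorm n x = vnorm n y"
  unfolding vnorm_def by (intro arg_cong[where f = sqrt] sum.cong) auto

lemma vnorm_scale: "vnorm n (\<lambda>i. c * x i) = cmod c * vnorm n x"
  by (simp add: vnorm_eq_L2_set norm_mult L2_set_right_distrib)

lemma vnorm_add_le: "vnorm n (\<lambda>i. x i + y i) \<le> vnorm n x + vnorm n y"
proof -
  have "vnorm n (\<lambda>i. x i + y i) \<le> L2_set (\<lambda>i. cmod (x i) + cmod (y i)) {..<n}"
    unfolding vnorm_eq_L2_set by (rule L2_set_mono) (auto simp: norm_triangle_ineq)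
  also have "\<dots> \<le> vnorm n x + vnorm n y"
    unfolding vnorm_eq_L2_set by (rule L2_set_triangle_ineq)
  finally show ?thesis .
qed

lemma cinner_cong:
  "(\<And>i. i < n \<Longrightarrow> x i = x' i) \<Longrightarrow> (\<And>i. i < n \<Longrightarrow> y i = y' i) \<Longrightarrow> cinner n x y = cinner n x' y'"
  unfolding cinner_def by (intro sum.cong) auto

lemma cnj_cinner: "cnj (cinner n x y) = cinner n y x"
  unfolding cinner_def by (simp add: mult.commute)

lemma cinner_scale_right: "cinner n x (\<lambda>i. c * y i) = c * cinner n x y"
  unfolding cinner_def by (simp add: sum_distrib_left mult_ac)

lemma cinner_self: "cinner n x x = of_real ((vnorm n x)\<^sup>2)"
  unfolding cinner_def vnorm_power2 of_real_sum by (simp add: cnj_mult_self)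

lemma cinner_diff_self:
  "cinner n (\<lambda>i. x i - y i) (\<lambda>i. x i - y i) = cinner n x x - cinner n x y - cinner n y x + cinner n y y"
  unfolding cinner_def by (simp add: algebra_simps sum.distrib sum_subtractf)

lemma cmod_cinner_le: "cmod (cinner n x y) \<le> vnorm n x * vnorm n y"
proof -
  have "cmod (cinner n x y) \<le> (\<Sum>i<n. cmod (x i) * cmod (y i))"
    unfolding cinner_def by (rule order_trans[OF norm_sum]) (simp add: norm_mult)
  also have "\<dots> \<le> vnorm n x * vnorm n y"
    using L2_set_mult_ineq[of "\<lambda>i. cmod (x i)" "\<lambda>i. cmod (y i)" "{..<n}"]
    by (simp add: vnorm_eq_L2_set)
  finally show ?thesis .
qed

lemma cinner_col_comb_right:
  "finite I \<Longrightarrow> cinner n x (col_comb I c M) = (\<Sum>k\<in>I. c k * cinner n x (col M k))"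
  unfolding cinner_def col_comb_def col_def
  by (simp add: sum_distrib_left sum_distrib_right mult_ac sum.swap[of _ I])

lemma cinner_col_comb_left:
  "finite I \<Longrightarrow> cinner n (col_comb I c M) x = (\<Sum>k\<in>I. cnj (c k) * cinner n (col M k) x)"
proof -
  assume "finite I"
  have "cinner n (col_comb I c M) x = cnj (cinner n x (col_comb I c M))"
    by (simp add: cnj_cinner)
  also have "\<dots> = (\<Sum>k\<in>I. cnj (c k) * cinner n (col M k) x)"
    using \<open>finite I\<close> by (simp add: cinner_col_comb_right cnj_cinner)
  finally show ?thesis .
qed

lemma cinner_col_col:
  "unitary_mat n M \<Longrightarrow> k < n \<Longrightarrow> l < n \<Longrightarrow> cinner n (col M k) (col M l) = (if k = l then 1 else 0)"
  unfolding unitary_mat_def cinner_def col_def by auto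

lemma cinner_col_col_comb:
  assumes "unitary_mat n M" "I \<subseteq> {..<n}" "k < n"
  shows "cinner n (col M k) (col_comb I c M) = (if k \<in> I then c k else 0)"
proof -
  have fin: "finite I" using assms(2) finite_subset by blast
  have "\<And>l. l \<in> I \<Longrightarrow> cinner n (col M k) (col M l) = (if l = k then 1 else 0)"
    using assms cinner_col_col by auto
  then have "cinner n (col M k) (col_comb I c M) = (\<Sum>l\<in>I. if l = k then c l else 0)"
    unfolding cinner_col_comb_right[OF fin] by (intro sum.cong) auto
  then show ?thesis using fin by simp
qed

lemma vnorm_col_comb_power2:
  assumes "unitary_mat n M" "I \<subseteq> {..<n}"
  shows "(vnorm n (col_comb I c M))\<^sup>2 = (\<Sum>k\<in>I. (cmod (c k))\<^sup>2)"
proof -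
  have "finite I" using assms(2) finite_subset by blast
  then have "cinner n (col_comb I c M) (col_comb I c M) = (\<Sum>k\<in>I. cnj (c k) * c k)"
    using assms(2) by (auto simp: cinner_col_comb_left cinner_col_col_comb[OF assms] intro!: sum.cong)
  then show ?thesis
    by (simp add: cinner_self cnj_mult_self del: of_real_power flip: of_real_sum)
qed

text \<open>Compare z with its projection onto the span of the columns in I.\<close>
lemma bessel_inequality:
  assumes "unitary_mat n M" "I \<subseteq> {..<n}"
  shows "(\<Sum>k\<in>I. (cmod (cinner n (col M k) z))\<^sup>2) \<le> (vnorm n z)\<^sup>2"
proof -
  define a where "a k = cinner n (col M k) z" for k
  define y where "y = col_comb I a M"
  define S where "S = (\<Sum>k\<in>I. (cmod (a k))\<^sup>2)"
  have "finite I" using assms(2) finite_subset by blast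
  then have yz: "cinner n y z = of_real S"
    by (simp add: y_def S_def cinner_col_comb_left a_def[symmetric] cnj_mult_self del: of_real_power flip: of_real_sum)
  then have zy: "cinner n z y = of_real S"
    by (metis cnj_cinner complex_cnj_complex_of_real)
  have yy: "cinner n y y = of_real S"
    using vnorm_col_comb_power2[OF assms] by (simp add: y_def S_def cinner_self)
  have "of_real ((vnorm n (\<lambda>i. z i - y i))\<^sup>2) = (of_real ((vnorm n z)\<^sup>2 - S) :: complex)"
    using cinner_diff_self[of n z y] yz zy yy by (simp add: cinner_self)
  then have "(vnorm n z)\<^sup>2 - S \<ge> 0"
    by (metis of_real_eq_iff zero_le_power2)
  then show ?thesis by (simp add: S_def a_def)
qed

lemma quad_eq_cinner: "quad n A z = cinner n z (mulv n A z)"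
  unfolding quad_def cinner_def mulv_def by (simp add: sum_distrib_left mult.assoc)

lemma mulv_add: "mulv n (\<lambda>i j. A i j + B i j) z i = mulv n A z i + mulv n B z i"
  unfolding mulv_def by (simp add: sum.distrib distrib_right)

lemma mulv_diff: "mulv n A (\<lambda>i. x i - y i) i = mulv n A x i - mulv n A y i"
  unfolding mulv_def by (simp add: sum_subtractf right_diff_distrib)

lemma mulv_scale: "mulv n A (\<lambda>i. c * x i) = (\<lambda>i. c * mulv n A x i)"
  unfolding mulv_def by (simp add: sum_distrib_left mult_ac)

lemma quad_add: "quad n (\<lambda>i j. A i j + B i j) z = quad n A z + quad n B z"
  unfolding quad_eq_cinner cinner_def by (simp add: mulv_add sum.distrib distrib_left)

lemma hermitian_add: "hermitian n A \<Longrightarrow> hermitian n B \<Longrightarrow> hermitian n (\<lambda>i j. A i j + B i j)"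
  unfolding hermitian_def by (metis complex_cnj_add)

lemma mulv_rank_one_sum:
  assumes "finite I" "\<And>i j. i < n \<Longrightarrow> j < n \<Longrightarrow> A i j = (\<Sum>k\<in>I. P i k * of_real (d k) * cnj (R j k))"
    and "i < n"
  shows "mulv n A z i = col_comb I (\<lambda>k. of_real (d k) * cinner n (col R k) z) P i"
proof -
  have "mulv n A z i = (\<Sum>j<n. (\<Sum>k\<in>I. P i k * of_real (d k) * cnj (R j k)) * z j)"
    unfolding mulv_def using assms by (intro sum.cong) auto
  also have "\<dots> = col_comb I (\<lambda>k. of_real (d k) * cinner n (col R k) z) P i"
    unfolding col_comb_def cinner_def col_def
    by (simp add: sum_distrib_left sum_distrib_right mult_ac sum.swap[of _ I])
  finally show ?thesis .
qed

lemma quad_rank_one_sum: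
  assumes "finite I" "\<And>i j. i < n \<Longrightarrow> j < n \<Longrightarrow> A i j = (\<Sum>k\<in>I. P i k * of_real (d k) * cnj (R j k))"
  shows "quad n A z = (\<Sum>k\<in>I. of_real (d k) * cinner n (col R k) z * cnj (cinner n (col P k) z))"
proof -
  have "quad n A z = cinner n z (col_comb I (\<lambda>k. of_real (d k) * cinner n (col R k) z) P)"
    unfolding quad_eq_cinner by (rule cinner_cong) (simp_all add: mulv_rank_one_sum[OF assms])
  also have "\<dots> = (\<Sum>k\<in>I. of_real (d k) * cinner n (col R k) z * cinner n z (col P k))"
    using assms(1) by (simp add: cinner_col_comb_right)
  finally show ?thesis
    by (simp add: cnj_cinner)
qed

lemma factorization_entry:
  "factorization n A P d R \<Longrightarrow> i < n \<Longrightarrow> j < n \<Longrightarrow>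
    A i j = (\<Sum>k\<in>{..<n}. P i k * of_real (d k) * cnj (R j k))"
  unfolding factorization_def by blast

lemma mulv_factorization:
  "factorization n A P d R \<Longrightarrow> i < n \<Longrightarrow>
    mulv n A z i = col_comb {..<n} (\<lambda>k. of_real (d k) * cinner n (col R k) z) P i"
  by (rule mulv_rank_one_sum[OF finite_lessThan factorization_entry])

lemma quad_factorization:
  "factorization n A P d R \<Longrightarrow>
    quad n A z = (\<Sum>k<n. of_real (d k) * cinner n (col R k) z * cnj (cinner n (col P k) z))"
  by (rule quad_rank_one_sum[OF finite_lessThan factorization_entry])

lemma quad_trunc:
  "quad n (trunc r V d) z = (\<Sum>k<r. of_real (d k) * cinner n (col V k) z * cnj (cinner n (col V k) z))"
  by (rule quad_rank_one_sum[OF finite_lessThan]) (simp add: trunc_def)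

lemma mulv_factorization_col:
  assumes "factorization n A P d R" "unitary_mat n R" "k < n" "i < n"
  shows "mulv n A (col R k) i = of_real (d k) * P i k"
proof -
  have "mulv n A (col R k) i = (\<Sum>l<n. if l = k then of_real (d l) * P i l else 0)"
    unfolding mulv_factorization[OF assms(1,4)] col_comb_def
    using assms(2,3) by (intro sum.cong) (auto simp: cinner_col_col)
  then show ?thesis using assms(3) by simp
qed

lemma vnorm_mulv_factorization_power2:
  assumes "factorization n A P d R" "unitary_mat n P"
  shows "(vnorm n (mulv n A z))\<^sup>2 = (\<Sum>k<n. (d k)\<^sup>2 * (cmod (cinner n (col R k) z))\<^sup>2)"
proof -
  have "vnorm n (mulv n A z) = vnorm n (col_comb {..<n} (\<lambda>k. of_real (d k) * cinner n (col R k) z) P)"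
    by (rule vnorm_cong) (rule mulv_factorization[OF assms(1)])
  then show ?thesis
    using vnorm_col_comb_power2[OF assms(2), of "{..<n}"] by (simp add: norm_mult power_mult_distrib)
qed

lemma factorization_hermitian_swap:
  assumes "hermitian n A" "factorization n A P d R"
  shows "factorization n A R d P"
  unfolding factorization_def
proof (intro allI impI)
  fix i j assume "i < n" "j < n"
  then have "A i j = cnj (\<Sum>k<n. P j k * of_real (d k) * cnj (R i k))"
    using assms unfolding hermitian_def factorization_def by simp
  then show "A i j = (\<Sum>k<n. R i k * of_real (d k) * cnj (P j k))"
    by (simp add: mult_ac)
qed

lemma psd_eigenvalue_nonneg:
  assumes "psd n A" "unitary_mat n U" "factorization n A U d U" "k < n"
  shows "0 \<le> d k"
proof -
  have "quad n A (col U k) = of_real (d k)"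
    using assms(2,4) by (simp add: quad_factorization[OF assms(3)] cinner_col_col if_distrib cong: if_cong)
  then show ?thesis
    using assms(1) unfolding psd_def by (metis Re_complex_of_real)
qed

lemma bdd_above_spec_norm_set: "bdd_above {vnorm n (mulv n A x) | x. vnorm n x \<le> 1}"
proof (rule bdd_aboveI)
  fix y assume "y \<in> {vnorm n (mulv n A x) | x. vnorm n x \<le> 1}"
  then obtain x where x: "vnorm n x \<le> 1" "y = vnorm n (mulv n A x)" by blast
  have xj: "cmod (x j) \<le> 1" if "j < n" for j
    using member_le_L2_set[of "{..<n}" j "\<lambda>i. cmod (x i)"] that x(1) by (simp add: vnorm_eq_L2_set)
  have "y \<le> (\<Sum>i<n. cmod (mulv n A x i))"
    unfolding x(2) vnorm_eq_L2_set by (rule L2_set_le_sum) simp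
  also have "\<dots> \<le> (\<Sum>i<n. \<Sum>j<n. cmod (A i j))"
  proof (rule sum_mono)
    fix i
    have "cmod (mulv n A x i) \<le> (\<Sum>j<n. cmod (A i j * x j))"
      unfolding mulv_def by (rule norm_sum)
    also have "\<dots> \<le> (\<Sum>j<n. cmod (A i j))"
      by (rule sum_mono) (auto simp: norm_mult intro: mult_left_le[OF xj])
    finally show "cmod (mulv n A x i) \<le> (\<Sum>j<n. cmod (A i j))" .
  qed
  finally show "y \<le> (\<Sum>i<n. \<Sum>j<n. cmod (A i j))" .
qed

lemma spec_norm_nonneg: "0 \<le> spec_norm n A"
proof -
  have "vnorm n (mulv n A (\<lambda>i. 0)) \<in> {vnorm n (mulv n A x) | x. vnorm n x \<le> 1}"
    by (auto simp: vnorm_def)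
  then have "vnorm n (mulv n A (\<lambda>i. 0)) \<le> spec_norm n A"
    unfolding spec_norm_def using bdd_above_spec_norm_set by (rule cSup_upper)
  then show ?thesis using vnorm_nonneg order_trans by blast
qed

lemma vnorm_mulv_le: "vnorm n (mulv n A x) \<le> spec_norm n A * vnorm n x"
proof (cases "vnorm n x = 0")
  case True
  then have "vnorm n (mulv n A x) = 0"
    by (simp add: vnorm_eq_0_iff mulv_def)
  then show ?thesis using True by simp
next
  case False
  define t where "t = vnorm n x"
  have "t > 0" using False vnorm_nonneg t_def by (metis order_less_le)
  define x' where "x' = (\<lambda>i. of_real (1 / t) * x i)"
  have "vnorm n x' = 1"
    unfolding x'_def vnorm_scale using \<open>t > 0\<close> by (simp add: t_def norm_divide)
  then have "vnorm n (mulv n A x') \<le> spec_norm n A"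
    unfolding spec_norm_def using bdd_above_spec_norm_set by (intro cSup_upper) auto
  moreover have "vnorm n (mulv n A x') = vnorm n (mulv n A x) / t"
    unfolding x'_def mulv_scale vnorm_scale using \<open>t > 0\<close> by (simp add: norm_divide)
  ultimately show ?thesis
    using \<open>t > 0\<close> by (simp add: t_def divide_le_eq mult.commute)
qed

lemma cmod_quad_le: "cmod (quad n A z) \<le> spec_norm n A * (vnorm n z)\<^sup>2"
proof -
  have "cmod (quad n A z) \<le> vnorm n z * vnorm n (mulv n A z)"
    unfolding quad_eq_cinner by (rule cmod_cinner_le)
  also have "\<dots> \<le> vnorm n z * (spec_norm n A * vnorm n z)"
    by (rule mult_left_mono[OF vnorm_mulv_le vnorm_nonneg])
  finally show ?thesis by (simp add: power2_eq_square mult_ac)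
qed

lemma Re_quad_psd_add_ge:
  assumes "psd n A"
  shows "- (spec_norm n B * (vnorm n z)\<^sup>2) \<le> Re (quad n (\<lambda>i j. A i j + B i j) z)"
proof -
  have "- (spec_norm n B * (vnorm n z)\<^sup>2) \<le> Re (quad n B z)"
    using cmod_quad_le[of n B z] abs_Re_le_cmod[of "quad n B z"] by linarith
  moreover have "0 \<le> Re (quad n A z)" using assms unfolding psd_def by blast
  ultimately show ?thesis by (simp add: quad_add)
qed

text \<open>The difference of the two singular vectors is an eigenvector for the eigenvalue
  -d k, which is incompatible with the lower bound on the quadratic form.\<close>
lemma factorization_hermitian_col_eq:
  assumes herm: "hermitian n A" and uP: "unitary_mat n P" and uR: "unitary_mat n R"
    and fact: "factorization n A P d R" and k: "k < n"
    and lower: "\<And>x. - (h * (vnorm n x)\<^sup>2) \<le> Re (quad n A x)" and gt: "h < d k"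
    and i: "i < n"
  shows "P i k = R i k"
proof -
  define m where "m = (\<lambda>i. P i k - R i k)"
  have Am: "mulv n A m j = of_real (- d k) * m j" if "j < n" for j
    using mulv_factorization_col[OF fact uR k that]
      mulv_factorization_col[OF factorization_hermitian_swap[OF herm fact] uP k that]
    by (simp add: m_def col_def mulv_diff[where x = "col P k" and y = "col R k", unfolded col_def]
        algebra_simps)
  have "quad n A m = cinner n m (\<lambda>i. of_real (- d k) * m i)"
    unfolding quad_eq_cinner by (rule cinner_cong) (simp_all add: Am)
  also have "\<dots> = of_real (- d k * (vnorm n m)\<^sup>2)"
    by (simp only: cinner_scale_right cinner_self of_real_mult)
  finally have "Re (quad n A m) = - d k * (vnorm n m)\<^sup>2"
    by simp
  then have "(d k - h) * (vnorm n m)\<^sup>2 \<le> 0"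
    using lower[of m] by (simp add: algebra_simps)
  then have "vnorm n m = 0"
    using gt by (simp add: mult_le_0_iff)
  then show ?thesis
    using i by (simp add: vnorm_eq_0_iff m_def)
qed

section \<open>Weyl's inequality for singular values\<close>

text \<open>One step of Gaussian elimination: equation m is used to eliminate the unknown p.\<close>
lemma homogeneous_system_eliminate:
  fixes A :: "nat \<Rightarrow> 'a \<Rightarrow> 'b::field"
  assumes "finite S" "p \<in> S" "A m p \<noteq> 0"
    and d: "\<forall>j<m. (\<Sum>i\<in>S - {p}. (A j i - A j p * A m i / A m p) * d i) = 0"
  defines "c \<equiv> d(p := - (\<Sum>i\<in>S - {p}. A m i * d i) / A m p)"
  shows "\<forall>j<Suc m. (\<Sum>i\<in>S. A j i * c i) = 0"
proof (intro allI impI)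
  fix j assume "j < Suc m"
  have "(\<Sum>i\<in>S - {p}. A j i * c i) = (\<Sum>i\<in>S - {p}. A j i * d i)"
    by (intro sum.cong) (auto simp: c_def)
  then have split: "(\<Sum>i\<in>S. A j i * c i) = A j p * c p + (\<Sum>i\<in>S - {p}. A j i * d i)"
    by (simp add: sum.remove[OF assms(1,2)])
  show "(\<Sum>i\<in>S. A j i * c i) = 0"
  proof (cases "j = m")
    case True
    then show ?thesis using split assms(3) by (simp add: c_def)
  next
    case False
    then have "(\<Sum>i\<in>S - {p}. (A j i - A j p * A m i / A m p) * d i) = 0"
      using d \<open>j < Suc m\<close> by simp
    then have "(\<Sum>i\<in>S - {p}. A j i * d i) = A j p / A m p * (\<Sum>i\<in>S - {p}. A m i * d i)"
      by (simp add: sum_subtractf sum_distrib_left algebra_simps)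
    then show ?thesis using split assms(3) by (simp add: c_def)
  qed
qed

lemma homogeneous_system_nontrivial_solution:
  fixes A :: "nat \<Rightarrow> 'a \<Rightarrow> 'b::field"
  assumes "finite S" "m < card S"
  shows "\<exists>c. (\<exists>i\<in>S. c i \<noteq> 0) \<and> (\<forall>j<m. (\<Sum>i\<in>S. A j i * c i) = 0)"
  using assms
proof (induction m arbitrary: S A)
  case 0
  then obtain i where "i \<in> S" by fastforce
  then show ?case by (intro exI[of _ "\<lambda>_. 1"]) auto
next
  case (Suc m)
  show ?case
  proof (cases "\<forall>i\<in>S. A m i = 0")
    case True
    obtain c where c: "\<exists>i\<in>S. c i \<noteq> 0" "\<forall>j<m. (\<Sum>i\<in>S. A j i * c i) = 0"
      using Suc.IH[of S A] Suc.prems by auto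
    then show ?thesis using True by (auto simp: less_Suc_eq)
  next
    case False
    then obtain p where p: "p \<in> S" "A m p \<noteq> 0" by blast
    have "finite (S - {p})" "m < card (S - {p})"
      using Suc.prems p by auto
    then obtain d where d: "\<exists>i\<in>S - {p}. d i \<noteq> 0"
        "\<forall>j<m. (\<Sum>i\<in>S - {p}. (A j i - A j p * A m i / A m p) * d i) = 0"
      using Suc.IH[of "S - {p}" "\<lambda>j i. A j i - A j p * A m i / A m p"] by blast
    let ?c = "d(p := - (\<Sum>i\<in>S - {p}. A m i * d i) / A m p)"
    have "\<exists>i\<in>S. ?c i \<noteq> 0"
      using d(1) by auto
    moreover have "\<forall>j<Suc m. (\<Sum>i\<in>S. A j i * ?c i) = 0"
      by (rule homogeneous_system_eliminate[OF Suc.prems(1) p d(2)])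
    ultimately show ?thesis by blast
  qed
qed

lemma vnorm_mulv_col_comb_ge:
  assumes uP: "unitary_mat n P" and uR: "unitary_mat n R" and fact: "factorization n A P d R"
    and sorted: "\<And>i j. i \<le> j \<Longrightarrow> j < n \<Longrightarrow> d j \<le> d i" and nonneg: "\<And>j. j < n \<Longrightarrow> 0 \<le> d j"
    and r: "r < n"
  shows "d r * vnorm n (col_comb {..r} c R) \<le> vnorm n (mulv n A (col_comb {..r} c R))"
proof -
  define z where "z = col_comb {..r} c R"
  have sub: "{..r} \<subseteq> {..<n}" using r by auto
  have Rz: "cinner n (col R k) z = (if k \<le> r then c k else 0)" if "k < n" for k
    using cinner_col_col_comb[OF uR sub that] by (simp add: z_def)
  have "(d r * vnorm n z)\<^sup>2 = (\<Sum>k\<le>r. (d r)\<^sup>2 * (cmod (c k))\<^sup>2)"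
    by (simp add: z_def power_mult_distrib vnorm_col_comb_power2[OF uR sub] sum_distrib_left)
  also have "\<dots> \<le> (\<Sum>k\<le>r. (d k)\<^sup>2 * (cmod (c k))\<^sup>2)"
    using r sorted nonneg by (intro sum_mono mult_right_mono power_mono) auto
  also have "\<dots> = (\<Sum>k<n. (d k)\<^sup>2 * (cmod (cinner n (col R k) z))\<^sup>2)"
    using sub by (intro sum.mono_neutral_cong_left) (auto simp: Rz)
  also have "\<dots> = (vnorm n (mulv n A z))\<^sup>2"
    by (rule vnorm_mulv_factorization_power2[OF fact uP, symmetric])
  finally show ?thesis
    unfolding z_def by (rule power2_le_imp_le) (rule vnorm_nonneg)
qed

lemma vnorm_mulv_le_if_orthogonal:
  assumes uP: "unitary_mat n P" and uR: "unitary_mat n R" and fact: "factorization n A P d R"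
    and sorted: "\<And>i j. i \<le> j \<Longrightarrow> j < n \<Longrightarrow> d j \<le> d i" and nonneg: "\<And>j. j < n \<Longrightarrow> 0 \<le> d j"
    and r: "r < n" and orth: "\<And>k. k < r \<Longrightarrow> cinner n (col R k) z = 0"
  shows "vnorm n (mulv n A z) \<le> d r * vnorm n z"
proof -
  have "(vnorm n (mulv n A z))\<^sup>2 = (\<Sum>k<n. (d k)\<^sup>2 * (cmod (cinner n (col R k) z))\<^sup>2)"
    by (rule vnorm_mulv_factorization_power2[OF fact uP])
  also have "\<dots> \<le> (\<Sum>k<n. (d r)\<^sup>2 * (cmod (cinner n (col R k) z))\<^sup>2)"
  proof (rule sum_mono)
    fix k assume k: "k \<in> {..<n}"
    show "(d k)\<^sup>2 * (cmod (cinner n (col R k) z))\<^sup>2 \<le> (d r)\<^sup>2 * (cmod (cinner n (col R k) z))\<^sup>2"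
    proof (cases "k < r")
      case True
      then show ?thesis using orth by simp
    next
      case False
      then have "(d k)\<^sup>2 \<le> (d r)\<^sup>2"
        using k by (intro power_mono sorted nonneg) auto
      then show ?thesis by (rule mult_right_mono) simp
    qed
  qed
  also have "\<dots> \<le> (d r)\<^sup>2 * (vnorm n z)\<^sup>2"
    unfolding sum_distrib_left[symmetric] by (rule mult_left_mono[OF bessel_inequality[OF uR]]) auto
  finally have "(vnorm n (mulv n A z))\<^sup>2 \<le> (d r * vnorm n z)\<^sup>2"
    by (simp add: power_mult_distrib)
  then show ?thesis
    by (rule power2_le_imp_le) (simp add: nonneg r vnorm_nonneg)
qed

text \<open>Weyl's inequality, via a nonzero vector in the span of the first r+1 right singular vectors
  of A + B that is orthogonal to the first r right singular vectors of A.\<close>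
lemma singular_value_add_le:
  assumes uP: "unitary_mat n P" and uR: "unitary_mat n R" and fA: "factorization n A P d R"
    and d_sorted: "\<And>i j. i \<le> j \<Longrightarrow> j < n \<Longrightarrow> d j \<le> d i" and d_nonneg: "\<And>j. j < n \<Longrightarrow> 0 \<le> d j"
    and uV: "unitary_mat n V" and uW: "unitary_mat n W"
    and fAB: "factorization n (\<lambda>i j. A i j + B i j) V s W"
    and s_sorted: "\<And>i j. i \<le> j \<Longrightarrow> j < n \<Longrightarrow> s j \<le> s i" and s_nonneg: "\<And>j. j < n \<Longrightarrow> 0 \<le> s j"
    and r: "r < n"
  shows "s r \<le> d r + spec_norm n B"
proof -
  obtain c where c: "\<exists>i\<in>{..r}. c i \<noteq> 0"
      "\<forall>j<r. (\<Sum>i\<in>{..r}. cinner n (col R j) (col W i) * c i) = 0"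
    using homogeneous_system_nontrivial_solution[of "{..r}" r "\<lambda>j i. cinner n (col R j) (col W i)"]
    by auto
  define z where "z = col_comb {..r} c W"
  have sub: "{..r} \<subseteq> {..<n}" using r by auto
  obtain i where "i \<le> r" "c i \<noteq> 0" using c(1) by auto
  then have "0 < (\<Sum>k\<le>r. (cmod (c k))\<^sup>2)"
    by (intro sum_pos2[of _ i]) auto
  then have z_pos: "0 < vnorm n z"
    using vnorm_col_comb_power2[OF uW sub, of c] vnorm_nonneg[of n z]
    by (metis z_def less_eq_real_def power_zero_numeral)
  have orth: "cinner n (col R k) z = 0" if "k < r" for k
    using c(2) that by (simp add: z_def cinner_col_comb_right mult.commute)
  have "s r * vnorm n z \<le> vnorm n (mulv n (\<lambda>i j. A i j + B i j) z)"
    unfolding z_def by (rule vnorm_mulv_col_comb_ge[OF uV uW fAB s_sorted s_nonneg r])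
  also have "\<dots> \<le> vnorm n (mulv n A z) + vnorm n (mulv n B z)"
    unfolding mulv_add[abs_def] by (rule vnorm_add_le)
  also have "\<dots> \<le> d r * vnorm n z + spec_norm n B * vnorm n z"
    using vnorm_mulv_le_if_orthogonal[OF uP uR fA d_sorted d_nonneg r orth] vnorm_mulv_le[of n B z]
    by linarith
  finally show ?thesis
    using z_pos by (simp add: distrib_right[symmetric])
qed

section \<open>Error of the truncated quadratic form\<close>

lemma mult_le_sum_squares: "0 \<le> x \<Longrightarrow> 0 \<le> y \<Longrightarrow> x * y \<le> x\<^sup>2 + y\<^sup>2" for x y :: real
  using sum_squares_bound[of x y] mult_nonneg_nonneg[of x y] by linarith

lemma cmod_diff_mult_le: "cmod (b - a) * cmod a \<le> 2 * ((cmod a)\<^sup>2 + (cmod b)\<^sup>2)"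
proof -
  have "cmod (b - a) \<le> cmod a + cmod b"
    using norm_triangle_ineq4[of b a] by simp
  then have "cmod (b - a) * cmod a \<le> (cmod a + cmod b) * cmod a"
    by (rule mult_right_mono) simp
  also have "\<dots> = (cmod a)\<^sup>2 + cmod a * cmod b"
    by (simp add: power2_eq_square algebra_simps)
  also have "\<dots> \<le> 2 * ((cmod a)\<^sup>2 + (cmod b)\<^sup>2)"
    using mult_le_sum_squares[OF norm_ge_zero norm_ge_zero, of a b] zero_le_power2[of "cmod b"]
    by (smt (verit))
  finally show ?thesis .
qed

lemma cmod_mult_cnj_le: "cmod (b * cnj a) \<le> (cmod a)\<^sup>2 + (cmod b)\<^sup>2"
  using mult_le_sum_squares[of "cmod a" "cmod b"] by (simp add: norm_mult mult.commute)

lemma cmod_of_real_mult_diff_cnj_le: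
  assumes "0 \<le> d" "0 \<le> h" "h < d \<Longrightarrow> b = a"
  shows "cmod (of_real d * (b - a) * cnj a) \<le> 2 * h * ((cmod a)\<^sup>2 + (cmod b)\<^sup>2)"
proof (cases "h < d")
  case True
  then show ?thesis using assms by simp
next
  case False
  have "cmod (of_real d * (b - a) * cnj a) = d * (cmod (b - a) * cmod a)"
    using assms(1) by (simp add: norm_mult)
  also have "\<dots> \<le> h * (2 * ((cmod a)\<^sup>2 + (cmod b)\<^sup>2))"
    using False assms(2) cmod_diff_mult_le[of b a] by (auto intro!: mult_mono[of d h])
  finally show ?thesis by (simp only: ac_simps)
qed

lemma cmod_of_real_mult_cnj_le:
  assumes "0 \<le> d" "d \<le> s"
  shows "cmod (of_real d * b * cnj a) \<le> s * ((cmod a)\<^sup>2 + (cmod b)\<^sup>2)"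
proof -
  have "cmod (of_real d * b * cnj a) = d * cmod (b * cnj a)"
    using assms(1) by (simp add: norm_mult)
  also have "\<dots> \<le> s * ((cmod a)\<^sup>2 + (cmod b)\<^sup>2)"
    using assms cmod_mult_cnj_le[of b a] by (auto intro!: mult_mono[of d s])
  finally show ?thesis .
qed

text \<open>For k < r and d k > h the k-th left and right singular vectors coincide, so the k-th terms of
  the two forms agree; every other term is at most 2h resp. s times the squared moduli of the
  coefficients of z, which Bessel's inequality sums up.\<close>
lemma quad_sub_quad_trunc_le:
  assumes herm: "hermitian n A" and uV: "unitary_mat n V" and uW: "unitary_mat n W"
    and fact: "factorization n A V d W"
    and lower: "\<And>x. - (h * (vnorm n x)\<^sup>2) \<le> Re (quad n A x)"
    and nonneg: "\<And>k. k < n \<Longrightarrow> 0 \<le> d k" and r: "r \<le> n"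
    and tail: "\<And>k. r \<le> k \<Longrightarrow> k < n \<Longrightarrow> d k \<le> s" and "0 \<le> h" "0 \<le> s"
  shows "cmod (quad n A z - quad n (trunc r V d) z) \<le> (4 * h + 2 * s) * (vnorm n z)\<^sup>2"
proof -
  define a where "a k = cinner n (col V k) z" for k
  define b where "b k = cinner n (col W k) z" for k
  define t where
    "t k = of_real (d k) * b k * cnj (a k) - (if k < r then of_real (d k) * a k * cnj (a k) else 0)" for k
  have "quad n (trunc r V d) z = (\<Sum>k<n. if k < r then of_real (d k) * a k * cnj (a k) else 0)"
    using r by (simp add: quad_trunc a_def sum.If_cases Int_absorb1 lessThan_subset_iff flip: lessThan_def)
  then have diff: "quad n A z - quad n (trunc r V d) z = (\<Sum>k<n. t k)"
    by (simp add: quad_factorization[OF fact] a_def b_def t_def sum_subtractf)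
  define w where "w k = (cmod (a k))\<^sup>2 + (cmod (b k))\<^sup>2" for k
  have term_le: "cmod (t k) \<le> (2 * h + s) * w k" if k: "k < n" for k
  proof -
    have "cmod (t k) \<le> (if k < r then 2 * h else s) * w k"
    proof (cases "k < r")
      case True
      have "b k = a k" if "h < d k"
      proof -
        have "\<And>i. i < n \<Longrightarrow> V i k = W i k"
          by (rule factorization_hermitian_col_eq[OF herm uV uW fact k lower that])
        then show ?thesis
          unfolding a_def b_def col_def by (intro cinner_cong) auto
      qed
      then have "cmod (of_real (d k) * (b k - a k) * cnj (a k)) \<le> 2 * h * w k"
        unfolding w_def using nonneg[OF k] \<open>0 \<le> h\<close> by (intro cmod_of_real_mult_diff_cnj_le)
      then show ?thesis
        using True by (simp add: t_def algebra_simps)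
    next
      case False
      then show ?thesis
        unfolding t_def w_def using nonneg[OF k] tail[of k] k by (simp add: cmod_of_real_mult_cnj_le)
    qed
    also have "\<dots> \<le> (2 * h + s) * w k"
      using \<open>0 \<le> h\<close> \<open>0 \<le> s\<close> by (intro mult_right_mono) (auto simp: w_def)
    finally show ?thesis .
  qed
  have "cmod (\<Sum>k<n. t k) \<le> (\<Sum>k<n. (2 * h + s) * w k)"
    by (rule order_trans[OF norm_sum sum_mono]) (simp add: term_le)
  also have "\<dots> = (2 * h + s) * ((\<Sum>k<n. (cmod (a k))\<^sup>2) + (\<Sum>k<n. (cmod (b k))\<^sup>2))"
    by (simp add: w_def sum.distrib flip: sum_distrib_left)
  also have "\<dots> \<le> (2 * h + s) * ((vnorm n z)\<^sup>2 + (vnorm n z)\<^sup>2)"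
    using bessel_inequality[OF uV, of "{..<n}" z] bessel_inequality[OF uW, of "{..<n}" z]
      \<open>0 \<le> h\<close> \<open>0 \<le> s\<close>
    unfolding a_def b_def by (intro mult_left_mono add_mono) auto
  finally show ?thesis
    by (simp add: diff algebra_simps)
qed

lemma quad_psd_add_sub_quad_trunc_le:
  assumes psd: "psd n A" and herm: "hermitian n B" and uV: "unitary_mat n V" and uW: "unitary_mat n W"
    and fact: "factorization n (\<lambda>i j. A i j + B i j) V d W"
    and nonneg: "\<And>k. k < n \<Longrightarrow> 0 \<le> d k" and r: "r \<le> n"
    and tail: "\<And>k. r \<le> k \<Longrightarrow> k < n \<Longrightarrow> d k \<le> s" and "0 \<le> s"
  shows "cmod (quad n A z - quad n (trunc r V d) z) \<le> (5 * spec_norm n B + 2 * s) * (vnorm n z)\<^sup>2"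
proof -
  have "hermitian n (\<lambda>i j. A i j + B i j)"
    using psd herm by (simp add: psd_def hermitian_add)
  then have "cmod (quad n (\<lambda>i j. A i j + B i j) z - quad n (trunc r V d) z)
      \<le> (4 * spec_norm n B + 2 * s) * (vnorm n z)\<^sup>2"
    using Re_quad_psd_add_ge[OF psd] spec_norm_nonneg \<open>0 \<le> s\<close>
    by (intro quad_sub_quad_trunc_le[OF _ uV uW fact _ nonneg r tail]) auto
  moreover have "cmod (quad n B z) \<le> spec_norm n B * (vnorm n z)\<^sup>2"
    by (rule cmod_quad_le)
  ultimately show ?thesis
    using norm_triangle_ineq4[of "quad n (\<lambda>i j. A i j + B i j) z - quad n (trunc r V d) z" "quad n B z"]
    by (simp add: quad_add algebra_simps)
qed

lemma cmod_roots_of_unity: "w \<in> roots_of_unity K \<Longrightarrow> cmod w = 1"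
  unfolding roots_of_unity_def by auto

lemma finite_roots_of_unity: "finite (roots_of_unity K)"
proof -
  have "roots_of_unity K = (\<lambda>k. exp (2 * of_real pi * \<i> * of_nat k / of_nat K)) ` {..<K}"
    unfolding roots_of_unity_def by blast
  then show ?thesis by simp
qed

lemma finite_feasible: "finite (feasible n K)"
proof -
  have "feasible n K = {z. \<forall>i. (i \<in> {..<n} \<longrightarrow> z i \<in> roots_of_unity K) \<and> (i \<notin> {..<n} \<longrightarrow> z i = 0)}"
    unfolding feasible_def by (auto simp: not_less)
  then show ?thesis
    using finite_set_of_finite_funs[OF finite_lessThan finite_roots_of_unity] by simp
qed

lemma vnorm_feasible:
  assumes "z \<in> feasible n K"
  shows "(vnorm n z)\<^sup>2 = real n"
proof -
  have "\<And>i. i < n \<Longrightarrow> (cmod (z i))\<^sup>2 = 1"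
    using assms cmod_roots_of_unity by (auto simp: feasible_def)
  then show ?thesis by (simp add: vnorm_power2)
qed

lemma Max_sub_approx_maximizer_le:
  fixes f g :: "'a \<Rightarrow> real"
  assumes "finite S" "x \<in> S" "\<And>y. y \<in> S \<Longrightarrow> g y \<le> g x" "\<And>y. y \<in> S \<Longrightarrow> \<bar>f y - g y\<bar> \<le> e"
  shows "\<bar>Max (f ` S) - f x\<bar> \<le> 2 * e"
proof -
  have "Max (f ` S) \<in> f ` S"
    using assms(1,2) by (intro Max_in) auto
  then obtain y where "y \<in> S" "Max (f ` S) = f y"
    by auto
  moreover have "f x \<le> Max (f ` S)"
    using assms(1,2) by simp
  ultimately show ?thesis
    using assms(3,4)[of y] assms(4)[of x] \<open>y \<in> S\<close> assms(2) by (auto simp: abs_le_iff)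
qed

lemma OPT_sub_quad_approx_maximizer_le:
  assumes "x \<in> feasible n K" "\<And>z. z \<in> feasible n K \<Longrightarrow> Re (quad n B z) \<le> Re (quad n B x)"
    and approx: "\<And>z. cmod (quad n A z - quad n B z) \<le> c * (vnorm n z)\<^sup>2"
  shows "\<bar>OPT n K A - Re (quad n A x)\<bar> \<le> 2 * (c * real n)"
proof -
  have "OPT n K A = Max ((\<lambda>z. Re (quad n A z)) ` feasible n K)"
    unfolding OPT_def by (simp add: image_def Bex_def conj_commute)
  moreover have "\<bar>Re (quad n A z) - Re (quad n B z)\<bar> \<le> c * real n" if "z \<in> feasible n K" for z
    using abs_Re_le_cmod[of "quad n A z - quad n B z"] approx[of z] vnorm_feasible[OF that] by simp
  ultimately show ?thesis
    using Max_sub_approx_maximizer_le[OF finite_feasible assms(1),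
        where g = "\<lambda>z. Re (quad n B z)" and f = "\<lambda>z. Re (quad n A z)"] assms(2)
    by simp
qed

lemma OPT_sub_quad_trunc_maximizer_le:
  assumes psd: "psd n Qs" and uU: "unitary_mat n U" and fU: "factorization n Qs U lam U"
    and lam_sorted: "\<And>i j. i \<le> j \<Longrightarrow> j < n \<Longrightarrow> lam j \<le> lam i" and lam_zero: "\<And>j. n \<le> j \<Longrightarrow> lam j = 0"
    and herm: "hermitian n H" and uV: "unitary_mat n V" and uW: "unitary_mat n W"
    and fV: "factorization n (\<lambda>i j. Qs i j + H i j) V sv W"
    and sv_sorted: "\<And>i j. i \<le> j \<Longrightarrow> j < n \<Longrightarrow> sv j \<le> sv i" and sv_nonneg: "\<And>j. j < n \<Longrightarrow> 0 \<le> sv j"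
    and r: "r \<le> n" and zr: "zr \<in> feasible n K"
    and zr_max: "\<And>z. z \<in> feasible n K \<Longrightarrow> Re (quad n (trunc r V sv) z) \<le> Re (quad n (trunc r V sv) zr)"
  shows "cmod (complex_of_real (OPT n K Qs) - quad n Qs zr) \<le> 14 * real n * (lam r + spec_norm n H)"
proof -
  define h where "h = spec_norm n H"
  have "0 \<le> h"
    unfolding h_def by (rule spec_norm_nonneg)
  have lam_nonneg: "0 \<le> lam j" if "j < n" for j
    using psd_eigenvalue_nonneg[OF psd uU fU that] .
  then have "0 \<le> lam r"
    using lam_zero by (cases "r < n") auto
  have "sv r \<le> lam r + h" if "r < n"
    unfolding h_def by (rule singular_value_add_le[OF uU uU fU lam_sorted lam_nonneg uV uW fV sv_sorted sv_nonneg that])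
  then have tail: "sv k \<le> lam r + h" if "r \<le> k" "k < n" for k
    using sv_sorted[OF that] that by fastforce
  have err: "\<And>z. cmod (quad n Qs z - quad n (trunc r V sv) z) \<le> (5 * h + 2 * (lam r + h)) * (vnorm n z)\<^sup>2"
    using quad_psd_add_sub_quad_trunc_le[OF psd herm uV uW fV sv_nonneg r tail] \<open>0 \<le> lam r\<close> \<open>0 \<le> h\<close>
    by (simp add: h_def)
  have "Im (quad n Qs zr) = 0"
    using psd by (simp add: psd_def)
  then have "cmod (complex_of_real (OPT n K Qs) - quad n Qs zr) = \<bar>OPT n K Qs - Re (quad n Qs zr)\<bar>"
    by (simp add: cmod_def)
  also have "\<dots> \<le> 2 * ((5 * h + 2 * (lam r + h)) * real n)"
    using OPT_sub_quad_approx_maximizer_le[OF zr zr_max] err by blast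
  also have "\<dots> \<le> 14 * real n * (lam r + h)"
    using \<open>0 \<le> lam r\<close> \<open>0 \<le> h\<close> by (simp add: algebra_simps)
  finally show ?thesis
    unfolding h_def .
qed

theorem corollary5:
  "\<exists>C::real. \<forall>(n::nat) (K::nat) (Qs::nat\<Rightarrow>nat\<Rightarrow>complex) (H::nat\<Rightarrow>nat\<Rightarrow>complex)
      (lam::nat\<Rightarrow>real) (U::nat\<Rightarrow>nat\<Rightarrow>complex)
      (V::nat\<Rightarrow>nat\<Rightarrow>complex) (W::nat\<Rightarrow>nat\<Rightarrow>complex) (sv::nat\<Rightarrow>real)
      (r::nat) (zr::nat\<Rightarrow>complex).
     K \<ge> 2 \<longrightarrow>
     psd n Qs \<longrightarrow>
     unitary_mat n U \<longrightarrow> factorization n Qs U lam U \<longrightarrow>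
     (\<forall>i j. i \<le> j \<longrightarrow> j < n \<longrightarrow> lam j \<le> lam i) \<longrightarrow> (\<forall>j\<ge>n. lam j = 0) \<longrightarrow>
     hermitian n H \<longrightarrow>
     unitary_mat n V \<longrightarrow> unitary_mat n W \<longrightarrow>
     factorization n (\<lambda>i j. Qs i j + H i j) V sv W \<longrightarrow>
     (\<forall>i j. i \<le> j \<longrightarrow> j < n \<longrightarrow> sv j \<le> sv i) \<longrightarrow> (\<forall>j<n. sv j \<ge> 0) \<longrightarrow>
     1 \<le> r \<longrightarrow> r \<le> card {j. j < n \<and> lam j \<noteq> 0} \<longrightarrow>
     zr \<in> feasible n K \<longrightarrow>
     (\<forall>z\<in>feasible n K. Re (quad n (trunc r V sv) z) \<le> Re (quad n (trunc r V sv) zr)) \<longrightarrow>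
     cmod (complex_of_real (OPT n K Qs) - quad n Qs zr)
       \<le> C * real n * (lam r + spec_norm n H)"
proof (intro exI[of _ 14] allI impI)
  fix n K Qs H lam U V W sv r zr
  assume "K \<ge> (2::nat)" and hyps: "psd n Qs" "unitary_mat n U" "factorization n Qs U lam U"
    "\<forall>i j. i \<le> j \<longrightarrow> j < n \<longrightarrow> lam j \<le> lam i" "\<forall>j\<ge>n. lam j = 0" "hermitian n H"
    "unitary_mat n V" "unitary_mat n W" "factorization n (\<lambda>i j. Qs i j + H i j) V sv W"
    "\<forall>i j. i \<le> j \<longrightarrow> j < n \<longrightarrow> sv j \<le> sv i" "\<forall>j<n. sv j \<ge> 0"
    and "1 \<le> r" and rank: "r \<le> card {j. j < n \<and> lam j \<noteq> 0}"
    and zr_max: "zr \<in> feasible n K" "\<forall>z\<in>feasible n K. Re (quad n (trunc r V sv) z) \<le> Re (quad n (trunc r V sv) zr)"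
  have "r \<le> n"
    using rank card_mono[of "{..<n}" "{j. j < n \<and> lam j \<noteq> 0}"] by fastforce
  with hyps zr_max show "cmod (complex_of_real (OPT n K Qs) - quad n Qs zr) \<le> 14 * real n * (lam r + spec_norm n H)"
    by (intro OPT_sub_quad_trunc_maximizer_le) auto
qed

end
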